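(* Let $S\in(0,1)$ and let $f_S,f_C,h_S,h_C>0$ satisfy the dominance assumption $f_S>h_C$ and $f_C>h_S$. Put $r_S=f_S/h_S$ and $r_C=f_C/h_C$. For the planar system \[ SB' = f_S\,SB\,(S-SB) - h_S\,CR\cdot SB,\qquad CR' = f_C\,CR\,(1-S-CR) - h_C\,SB\cdot CR, \] the following hold: (i) the equilibrium $(SB,CR)=(0,0)$ (i.e. $SR=S$, $CB=1-S$) is never stable; (ii) the Blue-victory equilibrium $(SB,CR)=(S,0)$ (i.e. $SR=CR=0$, $CB=1-S$) is stable if and only if $r_C<\frac{S}{1-S}$; (iii) the Red-victory equilibrium $(SB,CR)=(0,1-S)$ (i.e. $SB=CB=0$, $SR=S$) is stable if and only if $r_S<\frac{1-S}{S}$; (iv) the stalemate equilibrium $(SB_b,CR_b)$ is stable if and only if $\frac{1}{1+r_S}<S<\frac{r_C}{1+r_C}$, equivalently $r_C>\frac{S}{1-S}$ and $r_S>\frac{1-S}{S}$, where \[ CB_b=\frac{S(1+r_S)-1}{r_Sr_C-1},\quad SR_b=\frac{r_C-S(1+r_C)}{r_Sr_C-1},\quad SB_b=r_C\,CB_b,\quad CR_b=r_S\,SR_b . \] Moreover, the conditions in (ii) and (iii) cannot hold simultaneously.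
   Context: Basic armed-revolt model. A population of total size $1$ is split into supporters of Blue, a fixed fraction $S\in(0,1)$, and contrarians (supporters of Red), a fraction $1-S$. The variables $SB,SR,CR,CB\ge 0$ are the fractions of the total population that are, respectively, supporters controlled by Blue, supporters controlled by Red, contrarians controlled by Red, contrarians controlled by Blue, with $SB+SR=S$ and $CR+CB=1-S$. This reduces the model to the planar system in $(SB,CR)$ given in the claim. An equilibrium is called stable when all eigenvalues of the Jacobian of the planar system's right-hand side, evaluated at that equilibrium, have negative real part. Under the dominance assumption $r_Sr_C>1$, so the denominators in the stalemate formulas are positive. *)

theory Defs
  imports "HOL-Analysis.Analysis"
begin

definition SB_rhs :: "real \<Rightarrow> real \<Rightarrow> real \<Rightarrow> real \<Rightarrow> real \<Rightarrow> real" where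
  "SB_rhs fS hS S sb cr = fS * sb * (S - sb) - hS * cr * sb"

definition CR_rhs :: "real \<Rightarrow> real \<Rightarrow> real \<Rightarrow> real \<Rightarrow> real \<Rightarrow> real" where
  "CR_rhs fC hC S sb cr = fC * cr * (1 - S - cr) - hC * sb * cr"

definition jac :: "real \<Rightarrow> real \<Rightarrow> real \<Rightarrow> real \<Rightarrow> real \<Rightarrow> real \<Rightarrow> real \<Rightarrow> real^2^2" where
  "jac fS fC hS hC S sb cr =
     (\<chi> i j. if i = 1 then
                (if j = 1 then deriv (\<lambda>x. SB_rhs fS hS S x cr) sb
                          else deriv (\<lambda>y. SB_rhs fS hS S sb y) cr)
              else
                (if j = 1 then deriv (\<lambda>x. CR_rhs fC hC S x cr) sb
                          else deriv (\<lambda>y. CR_rhs fC hC S sb y) cr))"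

definition stable_matrix :: "real^'n^'n \<Rightarrow> bool" where
  "stable_matrix J \<longleftrightarrow>
     (\<forall>\<mu>::complex. det (\<chi> i j. complex_of_real (J $ i $ j) - (if i = j then \<mu> else 0)) = 0
        \<longrightarrow> Re \<mu> < 0)"

definition stable_eq :: "real \<Rightarrow> real \<Rightarrow> real \<Rightarrow> real \<Rightarrow> real \<Rightarrow> real \<Rightarrow> real \<Rightarrow> bool" where
  "stable_eq fS fC hS hC S sb cr \<longleftrightarrow> stable_matrix (jac fS fC hS hC S sb cr)"

end

theory Submission imports Defs begin

(* For a real 2x2 matrix the characteristic roots all lie in the open left
   half-plane iff the trace is negative and the determinant positive (the planar
   Routh-Hurwitz criterion, lemma hurwitz_2x2).  The Jacobian of the armed-revolt system is
   computed in closed form (jac_explicit), which turns stability of an equilibrium into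
   two polynomial inequalities (stable_eq_iff).
   At the three boundary equilibria the Jacobian is triangular, so stability means that
   both diagonal entries are negative (hurwitz_triangular); this yields (i)-(iii).
   At any interior equilibrium the diagonal entries reduce to -fS * sb and -fC * cr, and the
   determinant to sb * cr * (fS*fC - hS*hC); under dominance this is stable iff both
   coordinates are positive (stable_at_interior_equilibrium).  The stalemate point solves
   the equilibrium equations (stalemate_is_equilibrium), and the signs of its coordinates
   are read off from the formulas (stalemate_SB_pos_iff, stalemate_CR_pos_iff), giving (iv). *)

lemma hurwitz_2x2:
  fixes a b c d :: real
  shows "(\<forall>\<mu>::complex. (of_real a - \<mu>) * (of_real d - \<mu>) - of_real b * of_real c = 0 \<longrightarrow> Re \<mu> < 0)
     \<longleftrightarrow> (a + d < 0 \<and> a*d - b*c > 0)" (is "?L \<longleftrightarrow> ?R")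
proof
  assume R: ?R
  show ?L
  proof (intro allI impI)
    fix \<mu> :: complex
    assume root: "(of_real a - \<mu>) * (of_real d - \<mu>) - of_real b * of_real c = 0"
    obtain x y where mu: "\<mu> = Complex x y" by (cases \<mu>)
    from root have re: "a*d - b*c - (a+d)*x + x*x - y*y = 0" and im: "y * (2*x - (a+d)) = 0"
      by (auto simp: mu complex_eq_iff algebra_simps)
    show "Re \<mu> < 0"
    proof (cases "y = 0")
      case True
      text \<open>A real root: the polynomial is positive for all x \<ge> 0.\<close>
      show ?thesis
      proof (rule ccontr)
        assume "\<not> Re \<mu> < 0"
        hence "x \<ge> 0" by (simp add: mu)
        hence "0 \<le> (-(a+d))*x" using R by (intro mult_nonneg_nonneg) auto
        moreover have "0 \<le> x*x" by simp
        moreover have "a*d - b*c + (-(a+d))*x + x*x = 0" using re True by (simp add: algebra_simps)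
        ultimately show False using R by linarith
      qed
    next
      case False
      text \<open>A non-real root has real part equal to half the trace.\<close>
      hence "x = (a+d)/2" using im by simp
      thus ?thesis using R mu by simp
    qed
  qed
next
  assume L: ?L
  show ?R
  proof (rule ccontr)
    assume nR: "\<not> ?R"
    show False
    proof (cases "a*d - b*c \<le> 0")
      case True
      text \<open>Nonpositive determinant: the larger real root is nonnegative.\<close>
      define t where "t = a + d"
      define w where "w = sqrt (t*t - 4*(a*d-b*c))"
      have disc: "0 \<le> t*t - 4*(a*d-b*c)" using True by (smt (verit) zero_le_square)
      have ww: "w*w = t*t - 4*(a*d-b*c)" using disc by (simp add: w_def)
      have "\<bar>t\<bar> \<le> w" unfolding w_def using True
        by (intro real_le_rsqrt) (simp add: power2_eq_square)
      define x where "x = (t+w)/2"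
      have x0: "x \<ge> 0" using \<open>\<bar>t\<bar> \<le> w\<close> by (simp add: x_def)
      have "x*x - t*x + (a*d-b*c) = 0" unfolding x_def using ww by (simp add: field_simps)
      hence "(of_real a - of_real x) * (of_real d - of_real x) - of_real b * of_real c = (0::complex)"
        unfolding t_def
        by (simp only: of_real_mult[symmetric] of_real_diff[symmetric] of_real_eq_0_iff)
           (simp add: algebra_simps)
      with L have "Re (of_real x) < 0" by blast
      thus False using x0 by simp
    next
      case False
      text \<open>Positive determinant but nonnegative trace: take the root with the larger real part.\<close>
      hence t0: "a + d \<ge> 0" using nR by simp
      define z :: complex where "z = of_real ((a+d)*(a+d) - 4*(a*d-b*c))"
      define \<mu> where "\<mu> = (of_real (a+d) + csqrt z)/2"
      have "csqrt z * csqrt z = z" by (metis power2_csqrt power2_eq_square)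
      hence "(of_real a - \<mu>) * (of_real d - \<mu>) - of_real b * of_real c = 0"
        unfolding \<mu>_def z_def by (simp add: field_simps)
      with L have "Re \<mu> < 0" by blast
      moreover have "Re (csqrt z) \<ge> 0" by (rule Re_csqrt)
      moreover have "Re \<mu> = ((a+d) + Re (csqrt z))/2" unfolding \<mu>_def by simp
      ultimately show False using t0 by argo
    qed
  qed
qed

lemma hurwitz_triangular:
  fixes a b c d :: real
  assumes "b * c = 0"
  shows "(a + d < 0 \<and> a*d - b*c > 0) \<longleftrightarrow> a < 0 \<and> d < 0"
  using assms by (auto simp: zero_less_mult_iff)

lemma jac_explicit:
  "jac fS fC hS hC S sb cr =
    (\<chi> i j. if i = 1 then (if j = 1 then fS * (S - 2 * sb) - hS * cr else - hS * sb)
             else (if j = 1 then - hC * cr else fC * (1 - S - 2 * cr) - hC * sb))"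
proof -
  have derivs: "deriv (\<lambda>x. SB_rhs fS hS S x cr) sb = fS * (S - 2 * sb) - hS * cr"
    "deriv (\<lambda>y. SB_rhs fS hS S sb y) cr = - hS * sb"
    "deriv (\<lambda>x. CR_rhs fC hC S x cr) sb = - hC * cr"
    "deriv (\<lambda>y. CR_rhs fC hC S sb y) cr = fC * (1 - S - 2 * cr) - hC * sb"
    unfolding SB_rhs_def CR_rhs_def
    by (intro DERIV_imp_deriv; auto intro!: derivative_eq_intros simp: algebra_simps)+
  show ?thesis unfolding jac_def derivs ..
qed

lemma stable_eq_iff:
  "stable_eq fS fC hS hC S sb cr \<longleftrightarrow>
    (fS * (S - 2 * sb) - hS * cr) + (fC * (1 - S - 2 * cr) - hC * sb) < 0 \<and>
    (fS * (S - 2 * sb) - hS * cr) * (fC * (1 - S - 2 * cr) - hC * sb) - (- hS * sb) * (- hC * cr) > 0"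
proof -
  have "(2::2) \<noteq> 1" by simp
  thus ?thesis
    unfolding stable_eq_def stable_matrix_def jac_explicit det_2
    using hurwitz_2x2[of "fS * (S - 2 * sb) - hS * cr" "fC * (1 - S - 2 * cr) - hC * sb" "- hS * sb" "- hC * cr"]
    by (simp add: mult.commute)
qed

lemma stable_on_SB_axis:
  "stable_eq fS fC hS hC S sb 0 \<longleftrightarrow> fS * (S - 2 * sb) < 0 \<and> fC*(1 - S) - hC * sb < 0"
  unfolding stable_eq_iff
  using hurwitz_triangular[of "- hS * sb" "- hC*0" "fS * (S - 2 * sb)" "fC*(1 - S) - hC * sb"]
  by simp

lemma stable_on_CR_axis:
  "stable_eq fS fC hS hC S 0 cr \<longleftrightarrow> fS*S - hS * cr < 0 \<and> fC * (1 - S - 2 * cr) < 0"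
  unfolding stable_eq_iff
  using hurwitz_triangular[of "- hS*0" "- hC * cr" "fS*S - hS * cr" "fC * (1 - S - 2 * cr)"]
  by simp

text \<open>At a point solving the interior equilibrium equations (the right-hand sides
  divided by sb and cr) the Jacobian has diagonal (-fS sb, -fC cr) and determinant sb cr (fS fC - hS hC); under
  dominance it is stable exactly when both coordinates are positive.\<close>
lemma stable_at_interior_equilibrium:
  fixes fS fC hS hC S sb cr :: real
  assumes "0 < fS" "0 < fC" "hS*hC < fS*fC"
    and eq_SB: "fS*(S - sb) = hS * cr" and eq_CR: "fC*(1 - S - cr) = hC * sb"
  shows "stable_eq fS fC hS hC S sb cr \<longleftrightarrow> sb > 0 \<and> cr > 0"
proof -
  have a: "fS * (S - 2 * sb) - hS * cr = - fS * sb" using eq_SB by (simp add: algebra_simps)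
  have d: "fC * (1 - S - 2 * cr) - hC * sb = - fC * cr" using eq_CR by (simp add: algebra_simps)
  have det: "(- fS * sb) * (- fC * cr) - (- hS * sb) * (- hC * cr) = sb * cr * (fS*fC - hS*hC)"
    by (simp add: algebra_simps)
  have det_pos: "sb * cr * (fS*fC - hS*hC) > 0 \<longleftrightarrow> (sb > 0 \<and> cr > 0) \<or> (sb < 0 \<and> cr < 0)"
    using assms(3) by (simp add: zero_less_mult_iff)
  have "sb < 0 \<and> cr < 0 \<Longrightarrow> - fS * sb - fC * cr > 0"
  proof -
    assume "sb < 0 \<and> cr < 0"
    hence "fS * sb < 0" "fC * cr < 0" using assms(1,2) by (simp_all add: mult_pos_neg)
    thus ?thesis by simp
  qed
  moreover have "sb > 0 \<and> cr > 0 \<Longrightarrow> - fS * sb - fC * cr < 0"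
  proof -
    assume "sb > 0 \<and> cr > 0"
    hence "fS * sb > 0" "fC * cr > 0" using assms(1,2) by simp_all
    thus ?thesis by simp
  qed
  ultimately show ?thesis
    unfolding stable_eq_iff a d det det_pos by linarith
qed

lemma stalemate_is_equilibrium:
  fixes S fS fC hS hC rS rC SB CR :: real
  assumes "rS * rC \<noteq> 1" and "fS = rS * hS" "fC = rC * hC"
    and "SB = rC * ((S * (1 + rS) - 1) / (rS * rC - 1))"
    and "CR = rS * ((rC - S * (1 + rC)) / (rS * rC - 1))"
  shows "fS*(S - SB) = hS*CR" "fC*(1 - S - CR) = hC*SB"
proof -
  have "rS * rC - 1 \<noteq> 0" using assms(1) by simp
  thus "fS*(S - SB) = hS*CR" "fC*(1 - S - CR) = hC*SB"
    unfolding assms(2-5) by (simp_all add: field_simps)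
qed

lemma stalemate_SB_pos_iff:
  fixes S rS rC :: real
  assumes "0 < rS" "0 < rC" "rS * rC > 1"
  shows "rC * ((S * (1 + rS) - 1) / (rS * rC - 1)) > 0 \<longleftrightarrow> 1 / (1 + rS) < S"
proof -
  have "rC * ((S * (1 + rS) - 1) / (rS * rC - 1)) > 0 \<longleftrightarrow> S * (1 + rS) - 1 > 0"
    using assms by (simp add: zero_less_mult_iff zero_less_divide_iff)
  also have "\<dots> \<longleftrightarrow> 1 / (1 + rS) < S" using assms(1) by (simp add: field_simps)
  finally show ?thesis .
qed

lemma stalemate_CR_pos_iff:
  fixes S rS rC :: real
  assumes "0 < rS" "0 < rC" "rS * rC > 1"
  shows "rS * ((rC - S * (1 + rC)) / (rS * rC - 1)) > 0 \<longleftrightarrow> S < rC / (1 + rC)"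
proof -
  have "rS * ((rC - S * (1 + rC)) / (rS * rC - 1)) > 0 \<longleftrightarrow> rC - S * (1 + rC) > 0"
    using assms by (simp add: zero_less_mult_iff zero_less_divide_iff)
  also have "\<dots> \<longleftrightarrow> S < rC / (1 + rC)" using assms(2) by (simp add: field_simps)
  finally show ?thesis .
qed

lemma stalemate_window_iff:
  fixes S rS rC :: real
  assumes "0 < S" "S < 1" "0 < rS" "0 < rC"
  shows "(1 / (1 + rS) < S \<and> S < rC / (1 + rC)) \<longleftrightarrow> (rC > S / (1 - S) \<and> rS > (1 - S) / S)"
  using assms by (simp add: field_simps) (auto simp: algebra_simps)

text \<open>Under rS rC > 1 the two victory conditions exclude each other, since
  their right-hand sides multiply to 1.\<close>
lemma victories_exclusive:
  fixes S rS rC :: real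
  assumes "0 < S" "S < 1" "0 < rS" "0 < rC" "rS * rC > 1"
  shows "\<not> (rC < S / (1 - S) \<and> rS < (1 - S) / S)"
proof
  assume "rC < S / (1 - S) \<and> rS < (1 - S) / S"
  hence "rS * rC < ((1 - S) / S) * (S / (1 - S))" using assms(3,4)
    by (intro mult_strict_mono) auto
  also have "\<dots> = 1" using assms(1,2) by simp
  finally show False using assms(5) by simp
qed

theorem theorem1:
  fixes S fS fC hS hC :: real
  assumes "0 < S" "S < 1"
    and "0 < fS" "0 < fC" "0 < hS" "0 < hC"
    and "fS > hC" "fC > hS"
  defines "rS \<equiv> fS / hS" and "rC \<equiv> fC / hC"
  defines "CBb \<equiv> (S * (1 + rS) - 1) / (rS * rC - 1)"
    and "SRb \<equiv> (rC - S * (1 + rC)) / (rS * rC - 1)"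
  defines "SBb \<equiv> rC * CBb" and "CRb \<equiv> rS * SRb"
  shows "(\<not> stable_eq fS fC hS hC S 0 0)
    \<and> (stable_eq fS fC hS hC S S 0 \<longleftrightarrow> rC < S / (1 - S))
    \<and> (stable_eq fS fC hS hC S 0 (1 - S) \<longleftrightarrow> rS < (1 - S) / S)
    \<and> (stable_eq fS fC hS hC S SBb CRb \<longleftrightarrow> 1 / (1 + rS) < S \<and> S < rC / (1 + rC))
    \<and> ((1 / (1 + rS) < S \<and> S < rC / (1 + rC)) \<longleftrightarrow> (rC > S / (1 - S) \<and> rS > (1 - S) / S))
    \<and> (\<not> (rC < S / (1 - S) \<and> rS < (1 - S) / S))"
proof -
  have r_pos: "rS > 0" "rC > 0" using assms(3-6) by (simp_all add: rS_def rC_def)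
  have dominance: "hS*hC < fS*fC"
    using assms(5-8) mult_strict_mono[of hC fS hS fC] by (simp add: mult.commute)
  hence r_prod: "rS*rC > 1" using assms(5,6) by (simp add: rS_def rC_def field_simps)
  have origin: "\<not> stable_eq fS fC hS hC S 0 0"
    using assms(1-4) by (simp add: stable_on_SB_axis mult_less_0_iff)
  have blue: "stable_eq fS fC hS hC S S 0 \<longleftrightarrow> rC < S / (1 - S)"
    using assms(1-3,6) by (simp add: stable_on_SB_axis rC_def field_simps)
  have red: "stable_eq fS fC hS hC S 0 (1 - S) \<longleftrightarrow> rS < (1 - S) / S"
    using assms(1,2,4,5) by (simp add: stable_on_CR_axis rS_def field_simps)
  have "fS = rS * hS" "fC = rC * hC" using assms(5,6) by (simp_all add: rS_def rC_def)
  hence "fS*(S - SBb) = hS*CRb" "fC*(1 - S - CRb) = hC*SBb"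
    using stalemate_is_equilibrium r_prod unfolding SBb_def CRb_def CBb_def SRb_def by auto
  hence "stable_eq fS fC hS hC S SBb CRb \<longleftrightarrow> SBb > 0 \<and> CRb > 0"
    using stable_at_interior_equilibrium assms(3,4) dominance by blast
  hence stalemate: "stable_eq fS fC hS hC S SBb CRb \<longleftrightarrow> 1 / (1 + rS) < S \<and> S < rC / (1 + rC)"
    using stalemate_SB_pos_iff stalemate_CR_pos_iff r_pos r_prod
    unfolding SBb_def CRb_def CBb_def SRb_def by blast
  show ?thesis
    using origin blue red stalemate stalemate_window_iff[OF assms(1,2) r_pos]
      victories_exclusive[OF assms(1,2) r_pos r_prod] by blast
qed

end
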